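(* Let $r_{\min}\in(0,1)$, $n\ge1$, $\gamma\ge1$ a perfect-square integer, and $\ell\ge0$ an integer with $\gamma^{\ell+1}\le n$. Put $a_\ell=n/\gamma^\ell$, $a_{\ell+1}=a_\ell/\gamma$, $n_\ell=n/(2^\ell\gamma^\ell)$, $n_{\ell+1}=n_\ell/(2\gamma)$, $K_1=\frac{4(1+r_{\min})^2}{\pi r_{\min}^2}$, $K_2=\frac1{2K_1}$, $K_3=4/K_2$, $M=K_22^{-\ell}\gamma$ (all assumed integers, $M$ even), and assume $M\ge100$. Let $V\subset[0,\sqrt{a_\ell}]^2$ with $|V|=n_\ell$ and minimum separation $r_{\min}$, partition $[0,\sqrt{a_\ell}]^2$ into $\gamma$ squarelets of side $\sqrt{a_{\ell+1}}$, and let $\mathcal D$ be a set of $M$ dense squarelets (squarelets containing at least $n_{\ell+1}$ points of $V$). Let $\lambda$ be any permutation traffic matrix on $V$, i.e., a set of $n_\ell$ source–destination pairs $(u,w)$ in which every node is a source exactly once and a destination exactly once. Then one can assign to every pair $(u,w)$ a squarelet $k(u,w)\in\mathcal D$ with $r_{u,k(u,w)}\ge\sqrt{2a_{\ell+1}}$ and $r_{w,k(u,w)}\ge\sqrt{2a_{\ell+1}}$, and partition the set of pairs into at most $\lceil K_32^\ell\rceil$ classes such that within each class every squarelet of $\mathcal D$ is assigned to at most $n_{\ell+1}$ pairs.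
   Context: For a point $u$ and a squarelet $A$, $r_{u,A}=\min_{v\in A}\lVert u-v\rVert$ denotes the Euclidean distance from $u$ to the closest point of $A$. *)

theory Defs
  imports "HOL-Analysis.Analysis"
begin

text \<open>Points of the plane are pairs of reals; the product norm on real \<times> real is Euclidean.\<close>

definition squarelet :: "real \<Rightarrow> nat \<times> nat \<Rightarrow> (real \<times> real) set" where
  "squarelet s ij = {x. real (fst ij) * s \<le> fst x \<and> fst x \<le> (real (fst ij) + 1) * s
                      \<and> real (snd ij) * s \<le> snd x \<and> snd x \<le> (real (snd ij) + 1) * s}"

definition permutation_traffic :: "'a set \<Rightarrow> ('a \<times> 'a) set \<Rightarrow> bool" where
  "permutation_traffic V \<Lambda> \<longleftrightarrow> \<Lambda> \<subseteq> V \<times> V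
     \<and> (\<forall>u\<in>V. \<exists>!w. (u, w) \<in> \<Lambda>) \<and> (\<forall>w\<in>V. \<exists>!u. (u, w) \<in> \<Lambda>)"

end

theory Submission
  imports Defs
begin

(* A squarelet of side s is "near" a point u if u lies at distance
   less than sqrt 2 * s from it.  Only 25 squarelets of the grid are near any given
   point (their indices lie in windows of five consecutive integers per coordinate),
   so for a source-destination pair at most 50 dense squarelets are excluded.
   The pairs of the permutation traffic (there are as many as nodes, n_l) are split
   by their position in an enumeration into ceil(K3 2^l) classes of at most
   (M/2) n_l1 pairs.  Inside one class a greedy assignment sends every pair to a
   dense squarelet far from both endpoints that has not yet received n_l1 pairs;
   such a squarelet always exists since fewer than M - 50 squarelets can be full. *)

section \<open>Squarelets near a point\<close>

lemma infdist_less_imp_near: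
  assumes "A \<noteq> {}" and "infdist x A < r"
  obtains a where "a \<in> A" and "dist x a < r"
  using assms by (auto simp: infdist_notempty cINF_less_iff)

definition nat_window :: "real \<Rightarrow> nat set" where
  "nat_window x = {i. x < real i \<and> real i < x + 5}"

lemma nat_window_subset: "nat_window x \<subseteq> {nat (\<lfloor>x\<rfloor> + 1)..<nat (\<lfloor>x\<rfloor> + 1) + 5}"
proof
  fix i assume "i \<in> nat_window x"
  hence "x < real i" "real i < x + 5" by (auto simp: nat_window_def)
  hence "\<lfloor>x\<rfloor> + 1 \<le> int i" "int i \<le> \<lfloor>x\<rfloor> + 5" by linarith+
  thus "i \<in> {nat (\<lfloor>x\<rfloor> + 1)..<nat (\<lfloor>x\<rfloor> + 1) + 5}" by auto
qed

lemma finite_nat_window: "finite (nat_window x)"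
  using finite_subset[OF nat_window_subset] by blast

lemma card_nat_window: "card (nat_window x) \<le> 5"
  using card_mono[OF _ nat_window_subset] by simp

lemma index_in_window:
  assumes s: "s > 0"
    and strip: "real i * s \<le> t" "t \<le> (real i + 1) * s"
    and close: "\<bar>c - t\<bar> < sqrt 2 * s"
  shows "i \<in> nat_window (c / s - 1 - sqrt 2)"
proof -
  have sqrt2: "sqrt 2 < 2" by (smt (verit) real_sqrt_four real_sqrt_less_iff)
  from strip close have "real i * s < c + sqrt 2 * s" "c - sqrt 2 * s < (real i + 1) * s"
    by linarith+
  hence "real i < c / s + sqrt 2" "c / s - 1 - sqrt 2 < real i"
    using s by (simp_all add: field_simps)
  thus ?thesis using sqrt2 by (simp add: nat_window_def)
qed

definition near_squarelets :: "real \<Rightarrow> real \<times> real \<Rightarrow> (nat \<times> nat) set" where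
  "near_squarelets s u = {d. infdist u (squarelet s d) < sqrt 2 * s}"

lemma near_squarelets_subset:
  assumes s: "s > 0"
  shows "near_squarelets s u \<subseteq>
           nat_window (fst u / s - 1 - sqrt 2) \<times> nat_window (snd u / s - 1 - sqrt 2)"
proof
  fix d assume d: "d \<in> near_squarelets s u"
  obtain i j where ij: "d = (i, j)" by force
  have "(real i * s, real j * s) \<in> squarelet s d" using s by (simp add: ij squarelet_def)
  hence "squarelet s d \<noteq> {}" by blast
  then obtain x where x: "x \<in> squarelet s d" "dist u x < sqrt 2 * s"
    using d infdist_less_imp_near unfolding near_squarelets_def by blast
  have close: "\<bar>fst u - fst x\<bar> < sqrt 2 * s" "\<bar>snd u - snd x\<bar> < sqrt 2 * s"
    using x(2) dist_fst_le[of u x] dist_snd_le[of u x] by (simp_all add: dist_real_def)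
  have strip: "real i * s \<le> fst x" "fst x \<le> (real i + 1) * s"
    "real j * s \<le> snd x" "snd x \<le> (real j + 1) * s"
    using x(1) by (simp_all add: ij squarelet_def)
  show "d \<in> nat_window (fst u / s - 1 - sqrt 2) \<times> nat_window (snd u / s - 1 - sqrt 2)"
    using index_in_window[OF s strip(1,2) close(1)] index_in_window[OF s strip(3,4) close(2)]
    by (simp add: ij)
qed

lemma near_squarelets_finite_card:
  assumes "s > 0"
  shows "finite (near_squarelets s u)" and "card (near_squarelets s u) \<le> 25"
proof -
  let ?W = "nat_window (fst u / s - 1 - sqrt 2) \<times> nat_window (snd u / s - 1 - sqrt 2)"
  have fin: "finite ?W" by (simp add: finite_nat_window)
  show "finite (near_squarelets s u)"
    using finite_subset[OF near_squarelets_subset[OF assms] fin] .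
  have "card (near_squarelets s u) \<le> card ?W"
    using card_mono[OF fin near_squarelets_subset[OF assms]] .
  also have "\<dots> \<le> 5 * 5"
    unfolding card_cartesian_product by (intro mult_mono card_nat_window) auto
  finally show "card (near_squarelets s u) \<le> 25" by simp
qed

definition far_squarelets :: "real \<Rightarrow> real \<times> real \<Rightarrow> real \<times> real \<Rightarrow> (nat \<times> nat) set" where
  "far_squarelets s u w = {d. sqrt 2 * s \<le> infdist u (squarelet s d)
                              \<and> sqrt 2 * s \<le> infdist w (squarelet s d)}"

text \<open>A pair rules out at most 25 squarelets per endpoint, whatever the set D.\<close>
lemma card_not_far_squarelets:
  assumes "s > 0"
  shows "card (D - far_squarelets s u w) \<le> 50"
proof -
  have sub: "D - far_squarelets s u w \<subseteq> near_squarelets s u \<union> near_squarelets s w"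
    by (auto simp: far_squarelets_def near_squarelets_def)
  have "card (D - far_squarelets s u w) \<le> card (near_squarelets s u \<union> near_squarelets s w)"
    using sub near_squarelets_finite_card[OF assms] by (intro card_mono) auto
  also have "\<dots> \<le> card (near_squarelets s u) + card (near_squarelets s w)"
    by (rule card_Un_le)
  finally show ?thesis
    using near_squarelets_finite_card(2)[OF assms, of u] near_squarelets_finite_card(2)[OF assms, of w]
    by linarith
qed

section \<open>Combinatorial assignment\<close>

text \<open>A set of at most C h elements splits into C classes of at most h elements,
  by cutting an enumeration into consecutive blocks of length h.\<close>
lemma split_into_classes:
  assumes fin: "finite A" and card: "card A \<le> C * h"
  shows "\<exists>c. (\<forall>p\<in>A. c p < C) \<and> (\<forall>j. card {p\<in>A. c p = j} \<le> h)"
proof (cases "h = 0")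
  case True
  thus ?thesis using fin card by auto
next
  case False
  obtain f where f: "bij_betw f A {0..<card A}" using ex_bij_betw_finite_nat[OF fin] by blast
  define c where "c p = f p div h" for p
  have "c p < C" if "p \<in> A" for p
  proof -
    have "f p < C * h" using bij_betwE[OF f] that card by fastforce
    thus ?thesis by (simp add: c_def less_mult_imp_div_less)
  qed
  moreover have "card {p\<in>A. c p = j} \<le> h" for j
  proof -
    have "inj_on f {p\<in>A. c p = j}" using f by (auto simp: bij_betw_def intro: inj_on_subset)
    moreover have "f ` {p\<in>A. c p = j} \<subseteq> {j * h..<j * h + h}"
    proof
      fix y assume "y \<in> f ` {p\<in>A. c p = j}"
      then obtain p where y: "y = f p" and j: "f p div h = j" by (auto simp: c_def)
      have "f p div h * h + f p mod h = f p" "f p mod h < h"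
        using False by (simp_all add: div_mult_mod_eq)
      thus "y \<in> {j * h..<j * h + h}" using y j by auto
    qed
    ultimately have "card {p\<in>A. c p = j} \<le> card {j * h..<j * h + h}"
      by (intro card_inj_on_le) auto
    thus ?thesis by simp
  qed
  ultimately show ?thesis by blast
qed

lemma card_full_bins:
  assumes "finite P" "finite D" "\<forall>p\<in>P. k p \<in> D"
  shows "card {d\<in>D. q \<le> card {p\<in>P. k p = d}} * q \<le> card P"
proof -
  let ?Full = "{d\<in>D. q \<le> card {p\<in>P. k p = d}}"
  have "card ?Full * q = (\<Sum>d\<in>?Full. q)" by simp
  also have "\<dots> \<le> (\<Sum>d\<in>?Full. card {p\<in>P. k p = d})" by (rule sum_mono) simp
  also have "\<dots> \<le> (\<Sum>d\<in>D. card {p\<in>P. k p = d})" by (rule sum_mono2) (use assms in auto)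
  also have "\<dots> = card P" using card_eq_sum sum.group[OF assms(1,2), of k "\<lambda>_. 1::nat"] assms(3)
    by (simp add: image_subset_iff)
  finally show ?thesis .
qed

lemma greedy_assignment:
  assumes fP: "finite P" and fD: "finite D"
    and excluded: "\<forall>p\<in>P. card (D - E p) \<le> e"
    and cP: "card P \<le> (card D - e) * q"
  shows "\<exists>k. (\<forall>p\<in>P. k p \<in> D \<inter> E p) \<and> (\<forall>d\<in>D. card {p\<in>P. k p = d} \<le> q)"
  using fP excluded cP
proof (induction P rule: finite_induct)
  case empty
  show ?case by auto
next
  case (insert x F)
  hence cF: "card F < (card D - e) * q" by simp
  from insert obtain k where
    k_allowed: "\<forall>p\<in>F. k p \<in> D \<inter> E p" and k_cap: "\<forall>d\<in>D. card {p\<in>F. k p = d} \<le> q"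
    by fastforce
  define Full where "Full = {d\<in>D. q \<le> card {p\<in>F. k p = d}}"
  have "card Full * q \<le> card F"
    unfolding Full_def using card_full_bins[OF insert.hyps(1) fD] k_allowed by blast
  hence "card Full * q < (card D - e) * q" using cF by linarith
  hence "card Full < card D - e" by (metis mult_less_cancel2)
  moreover have "card D \<le> card (D \<inter> E x) + card (D - E x)"
    by (metis card_Un_le Int_Diff_Un)
  ultimately have "card Full < card (D \<inter> E x)" using insert.prems by auto
  hence "\<not> D \<inter> E x \<subseteq> Full" using card_mono[of Full "D \<inter> E x"] fD by (auto simp: Full_def)
  then obtain d0 where "d0 \<in> D \<inter> E x" "d0 \<notin> Full" by blast
  hence d0: "d0 \<in> D" "d0 \<in> E x" "card {p\<in>F. k p = d0} < q" by (auto simp: Full_def)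
  define k' where "k' = k(x := d0)"
  have "card {p\<in>insert x F. k' p = d} \<le> q" if "d \<in> D" for d
  proof (cases "d = d0")
    case True
    hence "{p\<in>insert x F. k' p = d} = insert x {p\<in>F. k p = d}"
      using insert.hyps by (auto simp: k'_def)
    thus ?thesis using True d0 insert.hyps by simp
  next
    case False
    hence "{p\<in>insert x F. k' p = d} = {p\<in>F. k p = d}" using insert.hyps by (auto simp: k'_def)
    thus ?thesis using k_cap that by simp
  qed
  moreover have "\<forall>p\<in>insert x F. k' p \<in> D \<inter> E p"
    using k_allowed d0 insert.hyps by (auto simp: k'_def)
  ultimately show ?case by blast
qed

lemma classwise_assignment:
  assumes fP: "finite P" and fD: "finite D"
    and excluded: "\<forall>p\<in>P. card (D - E p) \<le> e"
    and cP: "card P \<le> C * ((card D - e) * q)"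
  shows "\<exists>k c. (\<forall>p\<in>P. k p \<in> D \<inter> E p \<and> c p < C)
              \<and> (\<forall>j. \<forall>d\<in>D. card {p\<in>P. c p = j \<and> k p = d} \<le> q)"
proof -
  obtain c where c_lt: "\<forall>p\<in>P. c p < C" and c_card: "\<forall>j. card {p\<in>P. c p = j} \<le> (card D - e) * q"
    using split_into_classes[OF fP cP] by blast
  have "\<forall>j. \<exists>k. (\<forall>p\<in>{p\<in>P. c p = j}. k p \<in> D \<inter> E p)
                 \<and> (\<forall>d\<in>D. card {p\<in>{p\<in>P. c p = j}. k p = d} \<le> q)"
  proof
    fix j
    show "\<exists>k. (\<forall>p\<in>{p\<in>P. c p = j}. k p \<in> D \<inter> E p)
                 \<and> (\<forall>d\<in>D. card {p\<in>{p\<in>P. c p = j}. k p = d} \<le> q)"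
      by (rule greedy_assignment) (use fP fD excluded c_card in auto)
  qed
  then obtain K where K: "\<forall>j. (\<forall>p\<in>{p\<in>P. c p = j}. K j p \<in> D \<inter> E p)
                 \<and> (\<forall>d\<in>D. card {p\<in>{p\<in>P. c p = j}. K j p = d} \<le> q)"
    by (rule choice[THEN exE])
  have "{p\<in>P. c p = j \<and> K (c p) p = d} = {p\<in>{p\<in>P. c p = j}. K j p = d}" for j d by auto
  hence "\<forall>j. \<forall>d\<in>D. card {p\<in>P. c p = j \<and> K (c p) p = d} \<le> q" using K by simp
  moreover have "\<forall>p\<in>P. K (c p) p \<in> D \<inter> E p \<and> c p < C" using K c_lt by blast
  ultimately show ?thesis by (intro exI[of _ "\<lambda>p. K (c p) p"] exI[of _ c] conjI) blast+
qed

text \<open>A permutation traffic matrix has one pair per node: projecting to the source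
  is a bijection onto V.\<close>
lemma permutation_traffic_card:
  assumes "permutation_traffic V \<Lambda>"
  shows "card \<Lambda> = card V"
proof -
  have sub: "\<Lambda> \<subseteq> V \<times> V" and src: "\<forall>u\<in>V. \<exists>!w. (u, w) \<in> \<Lambda>"
    using assms unfolding permutation_traffic_def by blast+
  have inj: "inj_on fst \<Lambda>"
  proof (rule inj_onI)
    fix x y assume "x \<in> \<Lambda>" "y \<in> \<Lambda>" "fst x = fst y"
    thus "x = y" using sub src by (metis mem_Sigma_iff prod.collapse subsetD)
  qed
  have "fst ` \<Lambda> = V" using sub src by force
  thus ?thesis using card_image[OF inj] by simp
qed

lemma traffic_assignment:
  assumes V_fin: "finite V" and traffic: "permutation_traffic V \<Lambda>"
    and D_fin: "finite D" and s_pos: "s > 0"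
    and volume: "card V \<le> C * ((card D - 50) * q)"
  shows "\<exists>k c. (\<forall>p\<in>\<Lambda>. k p \<in> D \<inter> far_squarelets s (fst p) (snd p) \<and> c p < C)
              \<and> (\<forall>j. \<forall>d\<in>D. card {p\<in>\<Lambda>. c p = j \<and> k p = d} \<le> q)"
proof (rule classwise_assignment)
  show "finite \<Lambda>"
    using traffic V_fin unfolding permutation_traffic_def by (meson finite_SigmaI finite_subset)
  show "\<forall>p\<in>\<Lambda>. card (D - far_squarelets s (fst p) (snd p)) \<le> 50"
    using card_not_far_squarelets[OF s_pos] by blast
  show "card \<Lambda> \<le> C * ((card D - 50) * q)"
    using volume permutation_traffic_card[OF traffic] by simp
qed (rule D_fin)

text \<open>The constants fit: K3 2^l classes of M/2 squarelets holding n_l1 pairs each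
  carry exactly the n_l pairs of the traffic (here K3 = 4 / K2, M = K2 gam / 2^l).\<close>
lemma traffic_volume_identity:
  fixes K2 :: real and n gam l :: nat
  assumes "K2 > 0" and "gam > 0"
  shows "4 / K2 * 2 ^ l * (K2 / 2 ^ l * real gam / 2 * (real n / (2 ^ l * real gam ^ l) / (2 * real gam)))
         = real n / (2 ^ l * real gam ^ l)"
  using assms by (simp add: field_simps)

theorem lemma2:
  fixes r_min :: real and n gam g l :: nat
    and V :: "(real \<times> real) set"
    and D :: "(nat \<times> nat) set"
    and \<Lambda> :: "((real \<times> real) \<times> (real \<times> real)) set"
  defines "a_l \<equiv> real n / real gam ^ l"
    and "a_l1 \<equiv> real n / real gam ^ l / real gam"
    and "n_l \<equiv> real n / (2 ^ l * real gam ^ l)"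
    and "n_l1 \<equiv> real n / (2 ^ l * real gam ^ l) / (2 * real gam)"
    and "K2 \<equiv> 1 / (2 * (4 * (1 + r_min)\<^sup>2 / (pi * r_min\<^sup>2)))"
    and "K3 \<equiv> 4 / (1 / (2 * (4 * (1 + r_min)\<^sup>2 / (pi * r_min\<^sup>2))))"
    and "M \<equiv> 1 / (2 * (4 * (1 + r_min)\<^sup>2 / (pi * r_min\<^sup>2))) / 2 ^ l * real gam"
  assumes r_min: "0 < r_min" "r_min < 1"
    and n: "n \<ge> 1"
    and gam: "gam \<ge> 1" "gam = g\<^sup>2"
    and gl: "gam ^ (l + 1) \<le> n"
    and ints: "a_l \<in> \<int>" "a_l1 \<in> \<int>" "n_l \<in> \<int>" "n_l1 \<in> \<int>" "M \<in> \<int>"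
    and M_even: "\<exists>m::int. M = 2 * of_int m"
    and M_ge: "M \<ge> 100"
    and V_fin: "finite V"
    and V_box: "V \<subseteq> {0..sqrt a_l} \<times> {0..sqrt a_l}"
    and V_card: "real (card V) = n_l"
    and V_sep: "\<forall>u\<in>V. \<forall>v\<in>V. u \<noteq> v \<longrightarrow> dist u v \<ge> r_min"
    and D_sub: "D \<subseteq> {..<g} \<times> {..<g}"
    and D_card: "real (card D) = M"
    and D_dense: "\<forall>d\<in>D. real (card (V \<inter> squarelet (sqrt a_l1) d)) \<ge> n_l1"
    and traffic: "permutation_traffic V \<Lambda>"
  shows "\<exists>(k :: (real \<times> real) \<times> (real \<times> real) \<Rightarrow> nat \<times> nat)
            (c :: (real \<times> real) \<times> (real \<times> real) \<Rightarrow> nat).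
           (\<forall>p\<in>\<Lambda>. k p \<in> D
              \<and> infdist (fst p) (squarelet (sqrt a_l1) (k p)) \<ge> sqrt (2 * a_l1)
              \<and> infdist (snd p) (squarelet (sqrt a_l1) (k p)) \<ge> sqrt (2 * a_l1)
              \<and> real (c p) < of_int \<lceil>K3 * 2 ^ l\<rceil>)
         \<and> (\<forall>j. \<forall>d\<in>D. real (card {p\<in>\<Lambda>. c p = j \<and> k p = d}) \<le> n_l1)"
proof -
  define s where "s = sqrt a_l1"
  define C where "C = \<lceil>K3 * 2 ^ l\<rceil>"
  have gam_pos: "real gam > 0" using gam(1) by simp
  have s_pos: "s > 0" unfolding s_def a_l1_def using n gam_pos by simp
  have K2_pos: "K2 > 0" unfolding K2_def using r_min by (simp add: power2_eq_square)
  hence "K3 * 2 ^ l \<ge> 0" unfolding K3_def K2_def[symmetric] by simp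
  hence "C \<ge> 0" unfolding C_def by linarith
  have "n_l1 \<ge> 0" unfolding n_l1_def by simp
  then obtain q :: nat where q: "real q = n_l1"
    using ints(4) by (metis Ints_cases of_int_0_le_iff of_nat_nat)
  obtain m where m: "M = 2 * of_int m" using M_even by blast
  hence "card D = 2 * nat m" using D_card M_ge by simp
  hence half_D: "real (card D div 2 * q) = M / 2 * n_l1" and "card D div 2 \<le> card D - 50"
    using m M_ge q by auto
  have "real (card V) = K3 * 2 ^ l * real (card D div 2 * q)"
    unfolding V_card half_D n_l_def K3_def M_def n_l1_def K2_def[symmetric]
    using traffic_volume_identity[of K2 gam] K2_pos gam(1) by simp
  also have "\<dots> \<le> real (nat C * ((card D - 50) * q))"
    using \<open>C \<ge> 0\<close> \<open>card D div 2 \<le> card D - 50\<close> unfolding C_def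
    by (simp add: mult_mono)
  finally have volume: "card V \<le> nat C * ((card D - 50) * q)" by linarith
  obtain k c where
    kc: "\<forall>p\<in>\<Lambda>. k p \<in> D \<inter> far_squarelets s (fst p) (snd p) \<and> c p < nat C"
    and cap: "\<forall>j. \<forall>d\<in>D. card {p\<in>\<Lambda>. c p = j \<and> k p = d} \<le> q"
    using traffic_assignment[OF V_fin traffic finite_subset[OF D_sub] s_pos volume] by blast
  have "sqrt (2 * a_l1) = sqrt 2 * s" by (simp add: s_def real_sqrt_mult)
  hence "\<forall>p\<in>\<Lambda>. k p \<in> D \<and> sqrt (2 * a_l1) \<le> infdist (fst p) (squarelet (sqrt a_l1) (k p))
           \<and> sqrt (2 * a_l1) \<le> infdist (snd p) (squarelet (sqrt a_l1) (k p))
           \<and> real (c p) < of_int \<lceil>K3 * 2 ^ l\<rceil>"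
    using kc \<open>C \<ge> 0\<close> unfolding far_squarelets_def s_def C_def by auto
  moreover have "\<forall>j. \<forall>d\<in>D. real (card {p\<in>\<Lambda>. c p = j \<and> k p = d}) \<le> n_l1"
    using cap by (simp add: q[symmetric])
  ultimately show ?thesis by (intro exI[of _ k] exI[of _ c]) blast
qed

end
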